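(* For any growth control function $g$ and any strictly increasing sequence of integers $(p_j)_{j\in\mathbb{N}_0}$ with $p_0=0$, there exists a weight sequence $\boldsymbol{M}=(M_p)_p$, with quotients $m_p=M_{p+1}/M_p$, such that (i) $m_p\le g(p)$ for all $p\in\mathbb{N}_0$, and (ii) $m_{p_j}=g(p_j)$ for all $j\in\mathbb{N}_0$.
   Context: A growth control function is a strictly increasing function $g\colon[0,\infty)\to[1,\infty)$ with $g(0)=1$ and $\lim_{t\to\infty}g(t)=\infty$. A weight sequence is a sequence $\boldsymbol{M}=(M_p)_{p\in\mathbb{N}_0}$ of positive reals with $M_0=1$, $M_p^2\le M_{p-1}M_{p+1}$ for $p\ge1$, and $m_p=M_{p+1}/M_p\to\infty$. *)

theory Defs
  imports Complex_Main
begin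

definition growth_control :: "(real \<Rightarrow> real) \<Rightarrow> bool" where
  "growth_control g \<longleftrightarrow>
     strict_mono_on {0..} g \<and> (\<forall>t\<ge>0. g t \<ge> 1) \<and> g 0 = 1 \<and>
     filterlim g at_top at_top"

definition weight_sequence :: "(nat \<Rightarrow> real) \<Rightarrow> bool" where
  "weight_sequence M \<longleftrightarrow>
     (\<forall>p. M p > 0) \<and> M 0 = 1 \<and>
     (\<forall>p\<ge>1. (M p)\<^sup>2 \<le> M (p - 1) * M (p + 1)) \<and>
     filterlim (\<lambda>p. M (Suc p) / M p) at_top sequentially"

end

theory Submission
  imports Defs "HOL-Library.Infinite_Set"
begin

(* Let q(p) be the largest p_j not exceeding p and put m_p = g(q(p)). Since q is a
   nondecreasing step function with q(p) <= p, q(p_j) = p_j and q(p) -> infinity, the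
   quotients m_p are nondecreasing, bounded by g(p), equal to g(p_j) at p = p_j and
   unbounded; their partial products M_p therefore form the required weight sequence. *)

lemma growth_control_mono:
  assumes "growth_control g" "0 \<le> a" "a \<le> b"
  shows "g a \<le> g b"
  using assms strict_mono_on_leD[of "{0..}" g a b] unfolding growth_control_def by auto

lemma growth_control_tendsto: "growth_control g \<Longrightarrow> filterlim g at_top at_top"
  unfolding growth_control_def by blast

lemma growth_control_ge_1: "growth_control g \<Longrightarrow> 0 \<le> t \<Longrightarrow> g t \<ge> 1"
  unfolding growth_control_def by blast

definition prod_quotients :: "(nat \<Rightarrow> real) \<Rightarrow> nat \<Rightarrow> real" where
  "prod_quotients m p = (\<Prod>i<p. m i)"

lemma prod_quotients_pos: "(\<And>i. m i > 0) \<Longrightarrow> prod_quotients m p > 0"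
  unfolding prod_quotients_def by (rule prod_pos) simp

lemma prod_quotients_Suc: "prod_quotients m (Suc p) = prod_quotients m p * m p"
  unfolding prod_quotients_def by simp

lemma prod_quotients_quotient:
  "(\<And>i. m i > 0) \<Longrightarrow> prod_quotients m (Suc p) / prod_quotients m p = m p"
  using prod_quotients_pos[of m p] by (simp add: prod_quotients_Suc)

lemma weight_sequence_prod_quotients:
  assumes pos: "\<And>i. m i > 0" and "mono m" and "filterlim m at_top sequentially"
  shows "weight_sequence (prod_quotients m)"
proof -
  have "(prod_quotients m p)\<^sup>2 \<le> prod_quotients m (p - 1) * prod_quotients m (p + 1)"
    if "p \<ge> 1" for p
  proof -
    obtain k where p: "p = Suc k" using \<open>p \<ge> 1\<close> by (cases p) auto
    have "(prod_quotients m p)\<^sup>2 = (prod_quotients m k)\<^sup>2 * (m k * m k)"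
      by (simp add: p prod_quotients_Suc power2_eq_square)
    also have "\<dots> \<le> (prod_quotients m k)\<^sup>2 * (m k * m (Suc k))"
      using \<open>mono m\<close> pos[of k] by (intro mult_left_mono) (auto dest: monoD[of m k "Suc k"])
    also have "\<dots> = prod_quotients m (p - 1) * prod_quotients m (p + 1)"
      by (simp add: p prod_quotients_Suc power2_eq_square)
    finally show ?thesis .
  qed
  then show ?thesis
    using assms prod_quotients_pos[OF pos]
    unfolding weight_sequence_def prod_quotients_quotient[OF pos]
    by (simp add: prod_quotients_def)
qed

definition floor_in :: "nat set \<Rightarrow> nat \<Rightarrow> nat" where
  "floor_in A p = Max {k \<in> A. k \<le> p}"

context
  fixes A :: "nat set"
  assumes zero_in: "0 \<in> A"
begin

private lemma finite_below: "finite {k \<in> A. k \<le> p}"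
  by (rule finite_subset[of _ "{..p}"]) auto

lemma floor_in_mem_below: "floor_in A p \<in> {k \<in> A. k \<le> p}"
  unfolding floor_in_def using zero_in by (intro Max_in finite_below) auto

lemma floor_in_mem: "floor_in A p \<in> A" and floor_in_le: "floor_in A p \<le> p"
  using floor_in_mem_below by auto

lemma floor_in_greatest: "k \<in> A \<Longrightarrow> k \<le> p \<Longrightarrow> k \<le> floor_in A p"
  unfolding floor_in_def using finite_below by (intro Max_ge) auto

lemma floor_in_mono: "mono (floor_in A)"
  by (rule monoI) (use floor_in_mem floor_in_le floor_in_greatest order_trans in blast)

lemma floor_in_idem: "k \<in> A \<Longrightarrow> floor_in A k = k"
  using floor_in_le floor_in_greatest by (simp add: antisym)

lemma floor_in_tendsto:
  assumes "infinite A"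
  shows "filterlim (floor_in A) at_top sequentially"
  unfolding filterlim_at_top eventually_sequentially
proof
  fix z
  obtain a where "a \<in> A" "z \<le> a"
    using assms infinite_nat_iff_unbounded_le by blast
  then show "\<exists>N. \<forall>n\<ge>N. z \<le> floor_in A n"
    using floor_in_greatest order_trans by blast
qed

end

theorem proposition4p8:
  fixes g :: "real \<Rightarrow> real" and pj :: "nat \<Rightarrow> nat"
  assumes "growth_control g" and "strict_mono pj" and "pj 0 = 0"
  shows "\<exists>M. weight_sequence M \<and>
           (\<forall>p. M (Suc p) / M p \<le> g (real p)) \<and>
           (\<forall>j. M (Suc (pj j)) / M (pj j) = g (real (pj j)))"
proof -
  define A where "A = range pj"
  define m where "m p = g (real (floor_in A p))" for p
  have zero_in: "0 \<in> A"
    unfolding A_def using \<open>pj 0 = 0\<close> by (metis rangeI)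
  have pos: "m p > 0" for p
    unfolding m_def using growth_control_ge_1[OF assms(1)]
    by (simp add: less_le_trans[OF zero_less_one])
  have "mono m"
    using floor_in_mono[OF zero_in] growth_control_mono[OF assms(1)]
    by (auto simp: m_def mono_def)
  moreover have "filterlim m at_top sequentially"
  proof -
    have "infinite A"
      unfolding A_def using range_inj_infinite strict_mono_imp_inj_on assms(2) by blast
    then have "filterlim (floor_in A) at_top sequentially"
      using floor_in_tendsto[OF zero_in] by blast
    then show ?thesis
      unfolding m_def
      by (rule filterlim_compose[OF growth_control_tendsto[OF assms(1)]
            filterlim_compose[OF filterlim_real_sequentially]])
  qed
  ultimately have "weight_sequence (prod_quotients m)"
    using weight_sequence_prod_quotients pos by blast
  moreover have "m p \<le> g (real p)" for p
    unfolding m_def using floor_in_le[OF zero_in] growth_control_mono[OF assms(1)] by simp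
  moreover have "m (pj j) = g (real (pj j))" for j
    unfolding m_def A_def using floor_in_idem[OF zero_in[unfolded A_def]] by simp
  ultimately show ?thesis
    by (intro exI[of _ "prod_quotients m"]) (simp add: prod_quotients_quotient[OF pos])
qed

end
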